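(* Let $R$ be a commutative ring with identity, $\mathfrak{m}$ a maximal ideal of $R$, and $M$ a torsion-free unitary $R$-module. Then the following are equivalent: (1) $M$ is an $\mathfrak{m}$-Noetherian module; (2) $M_{\mathfrak{m}}$ is a Noetherian $R_{\mathfrak{m}}$-module and for every nonzero finitely generated $R$-submodule $L$ of $M$ there exists $s\in R\setminus\mathfrak{m}$ such that $L_{\mathfrak{m}}\cap M=L:s$.
   Context: For a prime ideal $P$, $M$ is $P$-Noetherian if it is $S$-Noetherian for $S=R\setminus P$, where a submodule $L$ is $S$-finite if there exist $s\in S$ and a finitely generated submodule $F$ of $M$ with $Ls\subseteq F\subseteq L$, and $M$ is $S$-Noetherian if every submodule is $S$-finite. For $r\in R$ and a submodule $L$ of $M$, $L:r=\{x\in M\mid xr\in L\}$. The intersection $L_{\mathfrak{m}}\cap M$ is taken in $M_{\mathfrak{m}}$, with $M$ identified with its image there. *)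

theory Defs
  imports Main "HOL.Modules"
begin

text \<open>The ring R is the type 'a (commutative ring with identity), the R-module M is the
type 'b, with scalar action sc (unitary R-module = locale module).  Submodules of M are
sets L with module.subspace sc L.  The paper writes the action on the right (x r); here
it is written sc r x.\<close>

definition ideal_of :: "'a::comm_ring_1 set \<Rightarrow> bool" where
  "ideal_of I \<longleftrightarrow> 0 \<in> I \<and> (\<forall>x\<in>I. \<forall>y\<in>I. x + y \<in> I) \<and> (\<forall>r. \<forall>x\<in>I. r * x \<in> I)"

definition maximal_ideal :: "'a::comm_ring_1 set \<Rightarrow> bool" where
  "maximal_ideal P \<longleftrightarrow> ideal_of P \<and> P \<noteq> UNIV \<and>
     (\<forall>J. ideal_of J \<and> P \<subseteq> J \<longrightarrow> J = P \<or> J = UNIV)"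

definition torsion_free :: "('a::comm_ring_1 \<Rightarrow> 'b::ab_group_add \<Rightarrow> 'b) \<Rightarrow> bool" where
  "torsion_free sc \<longleftrightarrow> (\<forall>r x. sc r x = 0 \<longrightarrow> r = 0 \<or> x = 0)"

definition fin_gen :: "('a::comm_ring_1 \<Rightarrow> 'b::ab_group_add \<Rightarrow> 'b) \<Rightarrow> 'b set \<Rightarrow> bool" where
  "fin_gen sc F \<longleftrightarrow> (\<exists>G. finite G \<and> F = module.span sc G)"

definition S_finite :: "('a::comm_ring_1 \<Rightarrow> 'b::ab_group_add \<Rightarrow> 'b) \<Rightarrow> 'a set \<Rightarrow> 'b set \<Rightarrow> bool" where
  "S_finite sc S L \<longleftrightarrow> (\<exists>s\<in>S. \<exists>F. module.subspace sc F \<and> fin_gen sc F \<and>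
      sc s ` L \<subseteq> F \<and> F \<subseteq> L)"

definition S_Noetherian :: "('a::comm_ring_1 \<Rightarrow> 'b::ab_group_add \<Rightarrow> 'b) \<Rightarrow> 'a set \<Rightarrow> bool" where
  "S_Noetherian sc S \<longleftrightarrow> (\<forall>L. module.subspace sc L \<longrightarrow> S_finite sc S L)"

definition P_Noetherian :: "('a::comm_ring_1 \<Rightarrow> 'b::ab_group_add \<Rightarrow> 'b) \<Rightarrow> 'a set \<Rightarrow> bool" where
  "P_Noetherian sc P \<longleftrightarrow> S_Noetherian sc (UNIV - P)"

definition colon :: "('a::comm_ring_1 \<Rightarrow> 'b::ab_group_add \<Rightarrow> 'b) \<Rightarrow> 'b set \<Rightarrow> 'a \<Rightarrow> 'b set" where
  "colon sc L r = {x. sc r x \<in> L}"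

section \<open>Localization M_P at a prime ideal P, as equivalence classes of fractions\<close>

definition frac :: "('a::comm_ring_1 \<Rightarrow> 'b::ab_group_add \<Rightarrow> 'b) \<Rightarrow> 'a set \<Rightarrow> 'b \<Rightarrow> 'a \<Rightarrow> ('b \<times> 'a) set" where
  "frac sc P x s = {(y, t). t \<notin> P \<and> (\<exists>u. u \<notin> P \<and> sc (u * t) x = sc (u * s) y)}"

definition loc_carrier :: "('a::comm_ring_1 \<Rightarrow> 'b::ab_group_add \<Rightarrow> 'b) \<Rightarrow> 'a set \<Rightarrow> ('b \<times> 'a) set set" where
  "loc_carrier sc P = {frac sc P x s | x s. s \<notin> P}"

definition loc_submodule :: "('a::comm_ring_1 \<Rightarrow> 'b::ab_group_add \<Rightarrow> 'b) \<Rightarrow> 'a set \<Rightarrow> ('b \<times> 'a) set set \<Rightarrow> bool" where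
  "loc_submodule sc P N \<longleftrightarrow> N \<subseteq> loc_carrier sc P \<and> frac sc P 0 1 \<in> N \<and>
     (\<forall>x s y t. s \<notin> P \<and> t \<notin> P \<and> frac sc P x s \<in> N \<and> frac sc P y t \<in> N \<longrightarrow>
        frac sc P (sc t x + sc s y) (s * t) \<in> N) \<and>
     (\<forall>r u x s. u \<notin> P \<and> s \<notin> P \<and> frac sc P x s \<in> N \<longrightarrow> frac sc P (sc r x) (u * s) \<in> N)"

definition loc_fin_gen :: "('a::comm_ring_1 \<Rightarrow> 'b::ab_group_add \<Rightarrow> 'b) \<Rightarrow> 'a set \<Rightarrow> ('b \<times> 'a) set set \<Rightarrow> bool" where
  "loc_fin_gen sc P N \<longleftrightarrow> (\<exists>G. finite G \<and> G \<subseteq> loc_carrier sc P \<and>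
      N = \<Inter>{K. loc_submodule sc P K \<and> G \<subseteq> K})"

definition loc_Noetherian :: "('a::comm_ring_1 \<Rightarrow> 'b::ab_group_add \<Rightarrow> 'b) \<Rightarrow> 'a set \<Rightarrow> bool" where
  "loc_Noetherian sc P \<longleftrightarrow> (\<forall>N. loc_submodule sc P N \<longrightarrow> loc_fin_gen sc P N)"

text \<open>L_P = {x/s | x \<in> L, s \<notin> P} and L_P \<inter> M = {x \<in> M. x/1 \<in> L_P}.\<close>
definition loc_sub :: "('a::comm_ring_1 \<Rightarrow> 'b::ab_group_add \<Rightarrow> 'b) \<Rightarrow> 'a set \<Rightarrow> 'b set \<Rightarrow> ('b \<times> 'a) set set" where
  "loc_sub sc P L = {frac sc P x s | x s. x \<in> L \<and> s \<notin> P}"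

definition loc_contract :: "('a::comm_ring_1 \<Rightarrow> 'b::ab_group_add \<Rightarrow> 'b) \<Rightarrow> 'a set \<Rightarrow> 'b set \<Rightarrow> 'b set" where
  "loc_contract sc P L = {x. frac sc P x 1 \<in> loc_sub sc P L}"

end

theory Submission
  imports Defs
begin

text \<open>Since M is torsion-free and P is prime, x/s = y/t holds iff t x = s y, so
L_P \<inter> M is the set of all x with u x \<in> L for some u \<notin> P.

If M is P-Noetherian, a submodule N of M_P is generated by G/1, where the finite set G
satisfies s C \<subseteq> span G \<subseteq> C for the contraction C = {x. x/1 \<in> N} of N; and for a submodule L
the same argument applied to C = L_P \<inter> M, combined with a common denominator u \<notin> P of G
with respect to L, gives L_P \<inter> M = L : u s.

Conversely, for a submodule N pick finitely many x \<in> N whose fractions generate N_P and let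
L be their span. Then N \<subseteq> L_P \<inter> M = L : s, so s N \<subseteq> L \<subseteq> N; if L = 0, torsion-freeness
forces N = 0.\<close>

definition prime_ideal :: "'a::comm_ring_1 set \<Rightarrow> bool" where
  "prime_ideal P \<longleftrightarrow> ideal_of P \<and> P \<noteq> UNIV \<and> (\<forall>a b. a * b \<in> P \<longrightarrow> a \<in> P \<or> b \<in> P)"

lemma ideal_of_add_principal:
  fixes P :: "'a::comm_ring_1 set"
  assumes P: "ideal_of P"
  shows "ideal_of {p + r * b | p r. p \<in> P}"
  unfolding ideal_of_def
proof (intro conjI ballI allI)
  show "0 \<in> {p + r * b | p r. p \<in> P}"
    using P by (auto simp: ideal_of_def intro!: exI[of _ 0])
next
  fix x y assume "x \<in> {p + r * b | p r. p \<in> P}" "y \<in> {p + r * b | p r. p \<in> P}"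
  then obtain p r p' r' where "x = p + r * b" "y = p' + r' * b" "p \<in> P" "p' \<in> P" by auto
  then have "x + y = (p + p') + (r + r') * b" "p + p' \<in> P"
    using P by (auto simp: ideal_of_def algebra_simps)
  then show "x + y \<in> {p + r * b | p r. p \<in> P}" by blast
next
  fix q x assume "x \<in> {p + r * b | p r. p \<in> P}"
  then obtain p r where "x = p + r * b" "p \<in> P" by auto
  moreover have "q * p \<in> P" using P \<open>p \<in> P\<close> by (simp add: ideal_of_def)
  ultimately have "q * x = q * p + (q * r) * b" "q * p \<in> P"
    by (simp_all add: algebra_simps)
  then show "q * x \<in> {p + r * b | p r. p \<in> P}" by blast
qed

lemma maximal_ideal_imp_prime_ideal:
  fixes P :: "'a::comm_ring_1 set"
  assumes "maximal_ideal P"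
  shows "prime_ideal P"
  unfolding prime_ideal_def
proof (intro conjI allI impI)
  have P: "ideal_of P" using assms by (simp add: maximal_ideal_def)
  then show "ideal_of P" .
  show "P \<noteq> UNIV" using assms by (simp add: maximal_ideal_def)
  fix a b assume ab: "a * b \<in> P"
  show "a \<in> P \<or> b \<in> P"
  proof (rule disjCI)
    assume "b \<notin> P"
    define J where "J = {p + r * b | p r. p \<in> P}"
    have "P \<subseteq> J"
    proof
      fix p assume "p \<in> P"
      then have "p = p + 0 * b \<and> p \<in> P" by simp
      then show "p \<in> J" unfolding J_def by blast
    qed
    moreover have "b \<in> J"
    proof -
      have "b = 0 + 1 * b \<and> 0 \<in> P" using P by (simp add: ideal_of_def)
      then show ?thesis unfolding J_def by blast
    qed
    ultimately have "J = UNIV"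
      using assms \<open>b \<notin> P\<close> ideal_of_add_principal[OF P] unfolding maximal_ideal_def J_def by blast
    then obtain p r where pr: "1 = p + r * b" "p \<in> P" unfolding J_def by blast
    have "a = a * (p + r * b)" using pr(1) by simp
    also have "\<dots> = a * p + r * (a * b)" by (simp add: algebra_simps)
    finally have "a = a * p + r * (a * b)" .
    moreover have "a * p + r * (a * b) \<in> P" using P pr(2) ab unfolding ideal_of_def by blast
    ultimately show "a \<in> P" by metis
  qed
qed

lemma (in module) subspace_colon:
  assumes "subspace L"
  shows "subspace (colon scale L r)"
  unfolding colon_def
proof (rule subspaceI)
  show "0 \<in> {x. scale r x \<in> L}" using assms subspace_0 by simp
  show "x + y \<in> {x. scale r x \<in> L}" if "x \<in> {x. scale r x \<in> L}" "y \<in> {x. scale r x \<in> L}" for x y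
    using that assms subspace_add by (simp add: scale_right_distrib)
  show "scale c x \<in> {x. scale r x \<in> L}" if "x \<in> {x. scale r x \<in> L}" for c x
  proof -
    have "scale r (scale c x) = scale c (scale r x)" by (simp add: mult.commute)
    then show ?thesis using that assms subspace_scale by (metis mem_Collect_eq)
  qed
qed

locale torsion_free_localization = module sc for sc :: "'a::comm_ring_1 \<Rightarrow> 'b::ab_group_add \<Rightarrow> 'b" +
  fixes P :: "'a set"
  assumes prime: "prime_ideal P" and torsion_free: "torsion_free sc"
begin

lemma zero_in_P: "0 \<in> P"
  using prime by (simp add: prime_ideal_def ideal_of_def)

lemma one_notin_P: "1 \<notin> P"
  using prime unfolding prime_ideal_def ideal_of_def by (metis UNIV_eq_I mult.right_neutral)

lemma mult_notin_P: "s \<notin> P \<Longrightarrow> t \<notin> P \<Longrightarrow> s * t \<notin> P"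
  using prime unfolding prime_ideal_def by blast

lemma scale_left_cancel:
  assumes "u \<notin> P" "sc u x = sc u y"
  shows "x = y"
proof -
  have "sc u (x - y) = 0" "u \<noteq> 0"
    using assms zero_in_P by (auto simp: scale_right_diff_distrib)
  then have "x - y = 0" using torsion_free unfolding torsion_free_def by blast
  then show "x = y" by simp
qed

lemma mem_frac_iff: "(y, t) \<in> frac sc P x s \<longleftrightarrow> t \<notin> P \<and> sc t x = sc s y"
proof -
  have "(\<exists>u. u \<notin> P \<and> sc (u * t) x = sc (u * s) y) \<longleftrightarrow> sc t x = sc s y"
  proof
    assume "\<exists>u. u \<notin> P \<and> sc (u * t) x = sc (u * s) y"
    then obtain u where "u \<notin> P" "sc u (sc t x) = sc u (sc s y)" by auto
    then show "sc t x = sc s y" by (rule scale_left_cancel)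
  next
    assume "sc t x = sc s y"
    then show "\<exists>u. u \<notin> P \<and> sc (u * t) x = sc (u * s) y"
      using one_notin_P by (intro exI[of _ 1]) simp
  qed
  then show ?thesis unfolding frac_def by simp
qed

text \<open>Torsion-freeness removes the auxiliary factor u from the equality of fractions.\<close>
lemma frac_eq_iff:
  assumes "s \<notin> P" "t \<notin> P"
  shows "frac sc P x s = frac sc P y t \<longleftrightarrow> sc t x = sc s y"
proof
  assume "frac sc P x s = frac sc P y t"
  moreover have "(y, t) \<in> frac sc P y t" using assms(2) by (simp add: mem_frac_iff)
  ultimately have "(y, t) \<in> frac sc P x s" by simp
  then show "sc t x = sc s y" by (simp add: mem_frac_iff)
next
  have transfer: "sc w y = sc t z"
    if "s \<notin> P" "sc t x = sc s y" "sc w x = sc s z" for x s y t z w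
  proof -
    have "sc s (sc w y) = sc w (sc s y)" by (simp add: mult.commute)
    also have "\<dots> = sc w (sc t x)" by (simp only: that(2))
    also have "\<dots> = sc t (sc w x)" by (simp add: mult.commute)
    also have "\<dots> = sc t (sc s z)" by (simp only: that(3))
    also have "\<dots> = sc s (sc t z)" by (simp add: mult.commute)
    finally show ?thesis by (rule scale_left_cancel[OF that(1)])
  qed
  assume eq: "sc t x = sc s y"
  have "sc w x = sc s z \<longleftrightarrow> sc w y = sc t z" for z w
    using transfer[OF assms(1) eq] transfer[OF assms(2) eq[symmetric]] by blast
  then show "frac sc P x s = frac sc P y t"
    by (auto simp: mem_frac_iff)
qed

lemma frac_mem_loc_sub_iff:
  assumes L: "subspace L" and s: "s \<notin> P"
  shows "frac sc P x s \<in> loc_sub sc P L \<longleftrightarrow> (\<exists>u. u \<notin> P \<and> sc u x \<in> L)"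
proof
  assume "frac sc P x s \<in> loc_sub sc P L"
  then obtain y t where "frac sc P x s = frac sc P y t" "y \<in> L" "t \<notin> P"
    unfolding loc_sub_def by blast
  moreover have "sc s y \<in> L" using L \<open>y \<in> L\<close> by (rule subspace_scale)
  ultimately have "t \<notin> P \<and> sc t x \<in> L" using frac_eq_iff[OF s] by simp
  then show "\<exists>u. u \<notin> P \<and> sc u x \<in> L" by blast
next
  assume "\<exists>u. u \<notin> P \<and> sc u x \<in> L"
  then obtain u where u: "u \<notin> P" "sc u x \<in> L" by blast
  have "frac sc P x s = frac sc P (sc u x) (u * s)"
    using frac_eq_iff[OF s mult_notin_P[OF u(1) s]] by (simp add: mult.commute)
  then show "frac sc P x s \<in> loc_sub sc P L"
    unfolding loc_sub_def using u mult_notin_P[OF u(1) s] by blast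
qed

lemma loc_contract_eq: "subspace L \<Longrightarrow> loc_contract sc P L = {x. \<exists>u. u \<notin> P \<and> sc u x \<in> L}"
  unfolding loc_contract_def using frac_mem_loc_sub_iff one_notin_P by blast

lemma subspace_loc_contract:
  assumes L: "subspace L"
  shows "subspace (loc_contract sc P L)"
  unfolding loc_contract_eq[OF L]
proof (rule subspaceI)
  show "0 \<in> {x. \<exists>u. u \<notin> P \<and> sc u x \<in> L}" using one_notin_P L subspace_0 by auto
next
  fix x y assume "x \<in> {x. \<exists>u. u \<notin> P \<and> sc u x \<in> L}" "y \<in> {x. \<exists>u. u \<notin> P \<and> sc u x \<in> L}"
  then obtain u v where uv: "u \<notin> P" "sc u x \<in> L" "v \<notin> P" "sc v y \<in> L" by blast
  have "sc (u * v) (x + y) = sc v (sc u x) + sc u (sc v y)"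
    by (simp add: scale_right_distrib mult.commute)
  also have "\<dots> \<in> L" using uv L subspace_add subspace_scale by blast
  finally show "x + y \<in> {x. \<exists>u. u \<notin> P \<and> sc u x \<in> L}" using mult_notin_P[OF uv(1,3)] by blast
next
  fix c x assume "x \<in> {x. \<exists>u. u \<notin> P \<and> sc u x \<in> L}"
  then obtain u where u: "u \<notin> P" "sc u x \<in> L" by blast
  have "sc u (sc c x) = sc c (sc u x)" by (simp add: mult.commute)
  also have "\<dots> \<in> L" using u L subspace_scale by blast
  finally show "sc c x \<in> {x. \<exists>u. u \<notin> P \<and> sc u x \<in> L}" using u by blast
qed

lemma loc_submodule_loc_sub:
  assumes L: "subspace L"
  shows "loc_submodule sc P (loc_sub sc P L)"
proof -
  have C: "subspace (loc_contract sc P L)" by (rule subspace_loc_contract[OF L])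
  have mem: "frac sc P x s \<in> loc_sub sc P L \<longleftrightarrow> x \<in> loc_contract sc P L" if "s \<notin> P" for x s
    using frac_mem_loc_sub_iff[OF L that] loc_contract_eq[OF L] by simp
  show ?thesis
    unfolding loc_submodule_def
  proof (intro conjI allI impI)
    show "loc_sub sc P L \<subseteq> loc_carrier sc P" unfolding loc_sub_def loc_carrier_def by blast
    show "frac sc P 0 1 \<in> loc_sub sc P L" using mem one_notin_P C subspace_0 by blast
  next
    fix x s y t
    assume h: "s \<notin> P \<and> t \<notin> P \<and> frac sc P x s \<in> loc_sub sc P L \<and> frac sc P y t \<in> loc_sub sc P L"
    then have "x \<in> loc_contract sc P L" "y \<in> loc_contract sc P L" using mem by auto
    then have "sc t x + sc s y \<in> loc_contract sc P L"
      using C subspace_add subspace_scale by blast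
    then show "frac sc P (sc t x + sc s y) (s * t) \<in> loc_sub sc P L"
      using mem mult_notin_P h by blast
  next
    fix r u x s assume h: "u \<notin> P \<and> s \<notin> P \<and> frac sc P x s \<in> loc_sub sc P L"
    then have "sc r x \<in> loc_contract sc P L" using mem C subspace_scale by blast
    then show "frac sc P (sc r x) (u * s) \<in> loc_sub sc P L"
      using mem mult_notin_P h by blast
  qed
qed

lemma loc_submodule_add:
  "loc_submodule sc P K \<Longrightarrow> s \<notin> P \<Longrightarrow> t \<notin> P \<Longrightarrow> frac sc P x s \<in> K \<Longrightarrow> frac sc P y t \<in> K
    \<Longrightarrow> frac sc P (sc t x + sc s y) (s * t) \<in> K"
  unfolding loc_submodule_def by blast

lemma loc_submodule_scale:
  "loc_submodule sc P K \<Longrightarrow> u \<notin> P \<Longrightarrow> s \<notin> P \<Longrightarrow> frac sc P x s \<in> K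
    \<Longrightarrow> frac sc P (sc r x) (u * s) \<in> K"
  unfolding loc_submodule_def by blast

lemma subspace_frac_one_preimage:
  assumes K: "loc_submodule sc P K"
  shows "subspace {x. frac sc P x 1 \<in> K}"
proof (rule subspaceI)
  show "0 \<in> {x. frac sc P x 1 \<in> K}" using K unfolding loc_submodule_def by simp
  show "x + y \<in> {x. frac sc P x 1 \<in> K}" if "x \<in> {x. frac sc P x 1 \<in> K}" "y \<in> {x. frac sc P x 1 \<in> K}" for x y
    using loc_submodule_add[OF K one_notin_P one_notin_P, of x y] that by simp
  show "sc c x \<in> {x. frac sc P x 1 \<in> K}" if "x \<in> {x. frac sc P x 1 \<in> K}" for c x
    using loc_submodule_scale[OF K one_notin_P one_notin_P, of x c] that by simp
qed

lemma frac_scale_mem_loc_submodule_iff: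
  assumes K: "loc_submodule sc P K" and s: "s \<notin> P" and t: "t \<notin> P"
  shows "frac sc P (sc s x) t \<in> K \<longleftrightarrow> frac sc P x 1 \<in> K"
proof
  assume "frac sc P (sc s x) t \<in> K"
  then have "frac sc P (sc t (sc s x)) (s * t) \<in> K" by (rule loc_submodule_scale[OF K s t])
  moreover have "frac sc P (sc t (sc s x)) (s * t) = frac sc P x 1"
    using frac_eq_iff[OF mult_notin_P[OF s t] one_notin_P] by (simp add: mult.commute)
  ultimately show "frac sc P x 1 \<in> K" by simp
next
  assume "frac sc P x 1 \<in> K"
  then have "frac sc P (sc s x) (t * 1) \<in> K" by (rule loc_submodule_scale[OF K t one_notin_P])
  then show "frac sc P (sc s x) t \<in> K" by simp
qed

lemma common_denominator:
  assumes "finite G" "G \<subseteq> loc_contract sc P L" "subspace L"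
  shows "\<exists>u. u \<notin> P \<and> sc u ` G \<subseteq> L"
  using assms
proof (induction G rule: finite_induct)
  case empty
  then show ?case using one_notin_P by blast
next
  case (insert a G)
  have "G \<subseteq> loc_contract sc P L" "a \<in> loc_contract sc P L" using insert.prems(1) by auto
  then obtain u where u: "u \<notin> P" "sc u ` G \<subseteq> L" using insert.IH insert.prems(2) by blast
  obtain v where v: "v \<notin> P" "sc v a \<in> L"
    using \<open>a \<in> loc_contract sc P L\<close> loc_contract_eq[OF insert.prems(2)] by blast
  have "sc u (sc v a) \<in> L" using insert.prems(2) v(2) by (rule subspace_scale)
  then have "sc (u * v) a \<in> L" by simp
  moreover have "sc (u * v) g \<in> L" if "g \<in> G" for g
  proof -
    have "sc u g \<in> L" using u(2) that by blast
    then have "sc v (sc u g) \<in> L" by (rule subspace_scale[OF insert.prems(2)])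
    then show ?thesis by (simp add: mult.commute)
  qed
  ultimately have "sc (u * v) ` insert a G \<subseteq> L" by blast
  then show ?case using mult_notin_P[OF u(1) v(1)] by blast
qed

lemma P_Noetherian_finite_span:
  assumes "P_Noetherian sc P" "subspace L"
  obtains s G where "s \<notin> P" "finite G" "sc s ` L \<subseteq> span G" "span G \<subseteq> L"
  using assms unfolding P_Noetherian_def S_Noetherian_def S_finite_def fin_gen_def by blast

lemma loc_Noetherian_if_P_Noetherian:
  assumes "P_Noetherian sc P"
  shows "loc_Noetherian sc P"
  unfolding loc_Noetherian_def
proof (intro allI impI)
  fix N assume N: "loc_submodule sc P N"
  define L where "L = {x. frac sc P x 1 \<in> N}"
  have "subspace L" using subspace_frac_one_preimage[OF N] unfolding L_def .
  then obtain s G where s: "s \<notin> P" and G: "finite G" "sc s ` L \<subseteq> span G" "span G \<subseteq> L"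
    using P_Noetherian_finite_span[OF assms] by blast
  let ?G = "(\<lambda>g. frac sc P g 1) ` G"
  have "?G \<subseteq> N" using G(3) span_superset unfolding L_def by blast
  have "N \<subseteq> K" if K: "loc_submodule sc P K" "?G \<subseteq> K" for K
  proof
    fix n assume "n \<in> N"
    then obtain x t where n: "n = frac sc P x t" "t \<notin> P"
      using N unfolding loc_submodule_def loc_carrier_def by blast
    have "x \<in> L"
      using \<open>n \<in> N\<close> frac_scale_mem_loc_submodule_iff[OF N one_notin_P n(2)] n(1)
      unfolding L_def by simp
    then have "sc s x \<in> span G" using G(2) by blast
    moreover have "span G \<subseteq> {x. frac sc P x 1 \<in> K}"
      using K subspace_frac_one_preimage[OF K(1)] by (intro span_minimal) auto
    ultimately have "frac sc P (sc s x) 1 \<in> K" by blast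
    then have "frac sc P x 1 \<in> K" using frac_scale_mem_loc_submodule_iff[OF K(1) s one_notin_P] by simp
    then show "n \<in> K" using frac_scale_mem_loc_submodule_iff[OF K(1) one_notin_P n(2)] n(1) by simp
  qed
  then have "N = \<Inter>{K. loc_submodule sc P K \<and> ?G \<subseteq> K}" using N \<open>?G \<subseteq> N\<close> by blast
  moreover have "finite ?G" "?G \<subseteq> loc_carrier sc P"
    using G(1) one_notin_P unfolding loc_carrier_def by auto
  ultimately show "loc_fin_gen sc P N" unfolding loc_fin_gen_def by blast
qed

lemma loc_contract_eq_colon_if_P_Noetherian:
  assumes "P_Noetherian sc P" and L: "subspace L"
  shows "\<exists>s. s \<notin> P \<and> loc_contract sc P L = colon sc L s"
proof -
  let ?C = "loc_contract sc P L"
  obtain s G where s: "s \<notin> P" and G: "finite G" "sc s ` ?C \<subseteq> span G" "span G \<subseteq> ?C"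
    using P_Noetherian_finite_span[OF assms(1) subspace_loc_contract[OF L]] by blast
  obtain u where u: "u \<notin> P" "sc u ` G \<subseteq> L"
    using common_denominator[OF G(1) _ L] G(3) span_superset by blast
  have "span G \<subseteq> colon sc L u"
    using u subspace_colon[OF L] by (intro span_minimal) (auto simp: colon_def)
  have "?C \<subseteq> colon sc L (u * s)"
  proof
    fix x assume "x \<in> ?C"
    then have "sc u (sc s x) \<in> L"
      using G(2) \<open>span G \<subseteq> colon sc L u\<close> unfolding colon_def by blast
    then show "x \<in> colon sc L (u * s)" unfolding colon_def by simp
  qed
  moreover have "colon sc L (u * s) \<subseteq> ?C"
    using loc_contract_eq[OF L] mult_notin_P[OF u(1) s] by (auto simp: colon_def)
  ultimately show ?thesis using mult_notin_P[OF u(1) s] by blast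
qed

lemma loc_sub_eq_image: "loc_sub sc P L = (\<lambda>(x, s). frac sc P x s) ` (L \<times> - P)"
  unfolding loc_sub_def by auto

text \<open>The conclusion says that N_P is generated by the fractions x/1 with x \<in> X.\<close>
lemma finite_numerators_of_loc_sub:
  assumes "loc_Noetherian sc P" and N: "subspace N"
  shows "\<exists>X. finite X \<and> X \<subseteq> N \<and> N \<subseteq> loc_contract sc P (span X)"
proof -
  have "loc_fin_gen sc P (loc_sub sc P N)"
    using assms(1) loc_submodule_loc_sub[OF N] unfolding loc_Noetherian_def by blast
  then obtain G where G: "finite G" "loc_sub sc P N = \<Inter>{K. loc_submodule sc P K \<and> G \<subseteq> K}"
    unfolding loc_fin_gen_def by blast
  have "G \<subseteq> loc_sub sc P N" unfolding G(2) by (rule Inter_greatest) simp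
  then have G_frac: "G \<subseteq> (\<lambda>(x, s). frac sc P x s) ` (N \<times> - P)"
    by (simp only: loc_sub_eq_image)
  obtain C where C: "C \<subseteq> N \<times> - P" "finite C" "G = (\<lambda>(x, s). frac sc P x s) ` C"
    using finite_subset_image[OF G(1) G_frac] by auto
  define X where "X = fst ` C"
  have "G \<subseteq> loc_sub sc P (span X)"
  proof
    fix g assume "g \<in> G"
    then obtain x s where xs: "(x, s) \<in> C" "g = frac sc P x s" using C(3) by auto
    have "x \<in> X" "s \<notin> P" using xs(1) C(1) unfolding X_def by force+
    then have "x \<in> span X" "s \<notin> P" using span_base by auto
    then show "g \<in> loc_sub sc P (span X)" unfolding loc_sub_def using xs(2) by blast
  qed
  then have "loc_sub sc P N \<subseteq> loc_sub sc P (span X)"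
    unfolding G(2) using loc_submodule_loc_sub[OF subspace_span] by (intro Inter_lower) simp
  moreover have "frac sc P x 1 \<in> loc_sub sc P N" if "x \<in> N" for x
    using that one_notin_P unfolding loc_sub_def by blast
  ultimately have "N \<subseteq> loc_contract sc P (span X)" unfolding loc_contract_def by blast
  moreover have "finite X" "X \<subseteq> N" using C(1,2) unfolding X_def by auto
  ultimately show ?thesis by blast
qed

lemma loc_contract_zero: "loc_contract sc P {0} = {0}"
  using loc_contract_eq[OF subspace_single_0] torsion_free zero_in_P one_notin_P
  unfolding torsion_free_def by auto

lemma P_Noetherian_if_loc_Noetherian:
  assumes "loc_Noetherian sc P"
    and colon: "\<forall>L. subspace L \<and> fin_gen sc L \<and> L \<noteq> {0} \<longrightarrow>
      (\<exists>s. s \<notin> P \<and> loc_contract sc P L = colon sc L s)"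
  shows "P_Noetherian sc P"
  unfolding P_Noetherian_def S_Noetherian_def
proof (intro allI impI)
  fix N assume N: "subspace N"
  obtain X where X: "finite X" "X \<subseteq> N" "N \<subseteq> loc_contract sc P (span X)"
    using finite_numerators_of_loc_sub[OF assms(1) N] by blast
  have "span X \<subseteq> N" using X(2) N by (rule span_minimal)
  obtain s where s: "s \<notin> P" "sc s ` N \<subseteq> span X"
  proof (cases "span X = {0}")
    case True
    then show ?thesis using that[OF one_notin_P] X(3) loc_contract_zero by auto
  next
    case False
    have "fin_gen sc (span X)" using X(1) unfolding fin_gen_def by blast
    then obtain s where "s \<notin> P" "loc_contract sc P (span X) = colon sc (span X) s"
      using colon False by blast
    then show ?thesis using that X(3) unfolding colon_def by blast
  qed
  then show "S_finite sc (UNIV - P) N"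
    unfolding S_finite_def fin_gen_def using X(1) \<open>span X \<subseteq> N\<close> by blast
qed

theorem P_Noetherian_iff:
  "P_Noetherian sc P \<longleftrightarrow> loc_Noetherian sc P \<and>
    (\<forall>L. subspace L \<and> fin_gen sc L \<and> L \<noteq> {0} \<longrightarrow>
      (\<exists>s. s \<notin> P \<and> loc_contract sc P L = colon sc L s))"
  using loc_Noetherian_if_P_Noetherian loc_contract_eq_colon_if_P_Noetherian
    P_Noetherian_if_loc_Noetherian by blast

end

theorem proposition2p2:
  fixes sc :: "'a::comm_ring_1 \<Rightarrow> 'b::ab_group_add \<Rightarrow> 'b" and m :: "'a set"
  assumes "module sc" and "maximal_ideal m" and "torsion_free sc"
  shows "P_Noetherian sc m \<longleftrightarrow>
    (loc_Noetherian sc m \<and>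
     (\<forall>L. module.subspace sc L \<and> fin_gen sc L \<and> L \<noteq> {0} \<longrightarrow>
        (\<exists>s. s \<notin> m \<and> loc_contract sc m L = colon sc L s)))"
proof -
  interpret torsion_free_localization sc m
    using assms maximal_ideal_imp_prime_ideal by (simp add: torsion_free_localization_axioms_def
      torsion_free_localization_def)
  show ?thesis by (rule P_Noetherian_iff)
qed

end
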